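(* Let $x\ge y\ge 1$. The maximum possible number of orderings of the tasks in an $(x,y)$ task-dependency graph of order $n$ is: $n!$ for $n=x$ (in which case $x=y$); $\frac{(x+1)!}{x-y+2}$ for $n=x+1$; $\frac{(x+2)!}{2(x-y+2)}$ for $n=x+2$ and $y>1$; and $\frac{(x+2)!}{2(x-y+3)}$ for $n=x+2$ and $y=1$. Moreover, the maximum possible number of orderings of the tasks in a $(1,1)$ task-dependency graph of order $n$ is $(n-2)!$ for $n\ge 2$.
   Context: A task-dependency graph is a finite directed acyclic graph (no loops, no multiple edges) whose vertices are called tasks. A vertex is initial if it has in-degree $0$ and terminal if it has out-degree $0$ (an isolated vertex is both). An $(x,y)$ task-dependency graph has exactly $x$ initial and exactly $y$ terminal vertices. The order is the number of vertices. An ordering of the tasks is a linear ordering of all vertices such that for every edge $(u,v)$, $u$ precedes $v$ (a topological ordering). *)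

theory Defs
  imports Complex_Main
begin

(* A task-dependency graph of order n: vertex set {0..<n}, edge relation E
   (a set of ordered pairs, so no multiple edges), acyclic (hence no loops). *)
definition tdg :: "nat \<Rightarrow> (nat \<times> nat) set \<Rightarrow> bool" where
  "tdg n E \<longleftrightarrow> E \<subseteq> {0..<n} \<times> {0..<n} \<and> acyclic E"

definition initial_vertices :: "nat \<Rightarrow> (nat \<times> nat) set \<Rightarrow> nat set" where
  "initial_vertices n E = {v \<in> {0..<n}. \<forall>u. (u, v) \<notin> E}"

definition terminal_vertices :: "nat \<Rightarrow> (nat \<times> nat) set \<Rightarrow> nat set" where
  "terminal_vertices n E = {v \<in> {0..<n}. \<forall>w. (v, w) \<notin> E}"

definition xy_tdg :: "nat \<Rightarrow> nat \<Rightarrow> nat \<Rightarrow> (nat \<times> nat) set \<Rightarrow> bool" where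
  "xy_tdg x y n E \<longleftrightarrow> tdg n E \<and> card (initial_vertices n E) = x \<and> card (terminal_vertices n E) = y"

definition orderings :: "nat \<Rightarrow> (nat \<times> nat) set \<Rightarrow> nat list set" where
  "orderings n E = {xs. distinct xs \<and> set xs = {0..<n} \<and>
     (\<forall>(u, v) \<in> E. \<forall>i j. i < length xs \<longrightarrow> j < length xs \<longrightarrow> xs ! i = u \<longrightarrow> xs ! j = v \<longrightarrow> i < j)}"

definition num_orderings :: "nat \<Rightarrow> (nat \<times> nat) set \<Rightarrow> nat" where
  "num_orderings n E = card (orderings n E)"

definition max_orderings_is :: "nat \<Rightarrow> nat \<Rightarrow> nat \<Rightarrow> real \<Rightarrow> bool" where
  "max_orderings_is x y n m \<longleftrightarrow>
     (\<exists>E. xy_tdg x y n E \<and> real (num_orderings n E) = m) \<and>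
     (\<forall>E. xy_tdg x y n E \<longrightarrow> real (num_orderings n E) \<le> m)"

end

(* The orderings of a task-dependency graph are the linear extensions of its edge relation E,
   and their number does not decrease when E is replaced by a relation contained in its
   transitive closure. For a forest, in which every vertex has at most one outgoing edge,
   Knuth's hook length formula counts them exactly: n! divided by the product of the subtree
   sizes.

   With one or two non-initial vertices every edge ends in one of them, and the transitive
   closure of E contains a forest with large subtrees: the star of all edge tails into the single
   non-initial vertex; a path u -> a -> b together with a star into b when the two non-initial
   vertices a, b are joined by an edge; two disjoint non-empty stars into a and b otherwise,
   where the product of the two subtree sizes is at least twice their sum. A (1,1) graph
   contains, up to transitivity, all edges out of its source and into its sink, which leaves
   (n-2)! orderings. In each case the relation exhibited, drawn as a graph, attains the bound. *)

theory Submission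
  imports Defs "HOL-Combinatorics.Multiset_Permutations"
begin

section \<open>Linear extensions\<close>

primrec list_order :: "'a list \<Rightarrow> ('a \<times> 'a) set" where
  "list_order [] = {}"
| "list_order (x # xs) = {x} \<times> set xs \<union> list_order xs"

lemma list_order_subset: "list_order xs \<subseteq> set xs \<times> set xs"
  by (induction xs) auto

lemma list_order_append:
  "list_order (xs @ ys) = list_order xs \<union> list_order ys \<union> set xs \<times> set ys"
  by (induction xs) auto

lemma list_order_rev: "list_order (rev xs) = (list_order xs)\<inverse>"
  by (induction xs) (auto simp: list_order_append)

lemma trans_list_order:
  assumes "distinct xs" shows "trans (list_order xs)"
  using assms
proof (induction xs)
  case (Cons x xs)
  then have IH: "trans (list_order xs)" and "x \<notin> set xs" by simp_all
  show ?case
  proof (rule transI)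
    fix a b c assume ab: "(a, b) \<in> list_order (x # xs)" and bc: "(b, c) \<in> list_order (x # xs)"
    have "b \<in> set xs" using ab list_order_subset by auto
    with bc \<open>x \<notin> set xs\<close> have "(b, c) \<in> list_order xs" by auto
    then have "c \<in> set xs" using list_order_subset by blast
    from ab consider "a = x" | "(a, b) \<in> list_order xs" by auto
    then show "(a, c) \<in> list_order (x # xs)"
    proof cases
      case 2
      with \<open>(b, c) \<in> list_order xs\<close> IH show ?thesis by (auto dest: transD)
    qed (use \<open>c \<in> set xs\<close> in simp)
  qed
qed simp

lemma list_order_iff_nth:
  "(a, b) \<in> list_order xs \<longleftrightarrow> (\<exists>i j. i < j \<and> j < length xs \<and> xs ! i = a \<and> xs ! j = b)"
proof (induction xs)
  case (Cons x xs)
  show ?case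
  proof
    assume "(a, b) \<in> list_order (x # xs)"
    then consider "a = x" "b \<in> set xs" | "(a, b) \<in> list_order xs" by auto
    then show "\<exists>i j. i < j \<and> j < length (x # xs) \<and> (x # xs) ! i = a \<and> (x # xs) ! j = b"
    proof cases
      case 1
      then obtain j where "j < length xs" "xs ! j = b" by (auto simp: in_set_conv_nth)
      then show ?thesis using 1 by (intro exI[of _ 0] exI[of _ "Suc j"]) auto
    next
      case 2
      then obtain i j where "i < j" "j < length xs" "xs ! i = a" "xs ! j = b" using Cons.IH by blast
      then show ?thesis by (intro exI[of _ "Suc i"] exI[of _ "Suc j"]) auto
    qed
  next
    assume "\<exists>i j. i < j \<and> j < length (x # xs) \<and> (x # xs) ! i = a \<and> (x # xs) ! j = b"
    then obtain i j where ij: "i < j" "j < length (x # xs)" "(x # xs) ! i = a" "(x # xs) ! j = b"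
      by blast
    then obtain j' where j': "j = Suc j'" by (cases j) auto
    show "(a, b) \<in> list_order (x # xs)"
    proof (cases i)
      case 0
      then show ?thesis using ij j' by auto
    next
      case (Suc i')
      then show ?thesis using ij j' Cons.IH by auto
    qed
  qed
qed simp

definition linear_extensions :: "'a set \<Rightarrow> ('a \<times> 'a) set \<Rightarrow> 'a list set" where
  "linear_extensions V R = {xs. distinct xs \<and> set xs = V \<and> R \<inter> V \<times> V \<subseteq> list_order xs}"

lemma linear_extensions_empty: "linear_extensions {} R = {[]}"
  unfolding linear_extensions_def by auto

lemma linear_extensions_subset_permutations: "linear_extensions V R \<subseteq> permutations_of_set V"
  unfolding linear_extensions_def permutations_of_set_def by blast

lemma finite_linear_extensions: "finite (linear_extensions V R)"
  using finite_subset[OF linear_extensions_subset_permutations finite_permutations_of_set] .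

lemma card_linear_extensions_le_fact:
  assumes "finite V" shows "card (linear_extensions V R) \<le> fact (card V)"
proof -
  have "card (linear_extensions V R) \<le> card (permutations_of_set V)"
    by (rule card_mono[OF finite_permutations_of_set linear_extensions_subset_permutations])
  then show ?thesis using assms by simp
qed

lemma linear_extensions_unconstrained:
  assumes "R \<inter> V \<times> V = {}" shows "linear_extensions V R = permutations_of_set V"
  using assms unfolding linear_extensions_def permutations_of_set_def by blast

lemma linear_extensions_cong:
  "R \<inter> V \<times> V = R' \<inter> V \<times> V \<Longrightarrow> linear_extensions V R = linear_extensions V R'"
  unfolding linear_extensions_def by simp

lemma card_linear_extensions_le_if_subset_trancl:
  assumes "finite V" "R \<subseteq> V \<times> V" "R' \<subseteq> R\<^sup>+"
  shows "card (linear_extensions V R) \<le> card (linear_extensions V R')"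
proof (rule card_mono[OF finite_linear_extensions], rule subsetI)
  fix xs assume xs: "xs \<in> linear_extensions V R"
  then have "R\<^sup>+ \<subseteq> (list_order xs)\<^sup>+"
    using assms(2) unfolding linear_extensions_def by (blast intro: trancl_mono)
  also have "\<dots> = list_order xs"
    using xs trancl_id[OF trans_list_order] unfolding linear_extensions_def by auto
  finally show "xs \<in> linear_extensions V R'"
    using xs assms(3) unfolding linear_extensions_def by blast
qed

lemma linear_extensions_converse: "linear_extensions V (R\<inverse>) = rev ` linear_extensions V R"
proof -
  have rev_iff: "xs \<in> linear_extensions V (R\<inverse>) \<longleftrightarrow> rev xs \<in> linear_extensions V R" for xs
    unfolding linear_extensions_def by (auto simp: list_order_rev)
  show ?thesis
  proof (intro set_eqI iffI)
    fix xs assume "xs \<in> linear_extensions V (R\<inverse>)"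
    then show "xs \<in> rev ` linear_extensions V R"
      using rev_iff by (intro rev_image_eqI[of "rev xs"]) simp_all
  next
    fix xs assume "xs \<in> rev ` linear_extensions V R"
    then obtain ys where "ys \<in> linear_extensions V R" "xs = rev ys" by blast
    then show "xs \<in> linear_extensions V (R\<inverse>)" using rev_iff[of xs] by simp
  qed
qed

lemma card_linear_extensions_converse:
  "card (linear_extensions V (R\<inverse>)) = card (linear_extensions V R)"
  by (simp add: linear_extensions_converse card_image)

lemma snoc_in_linear_extensions_iff:
  "xs @ [v] \<in> linear_extensions V R \<longleftrightarrow>
     v \<in> V \<and> (\<forall>w\<in>V. (v, w) \<notin> R) \<and> xs \<in> linear_extensions (V - {v}) R"
proof -
  have "xs @ [v] \<in> linear_extensions V R \<longleftrightarrow>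
     v \<in> V \<and> v \<notin> set xs \<and> distinct xs \<and> set xs = V - {v} \<and>
     R \<inter> V \<times> V \<subseteq> list_order xs \<union> set xs \<times> {v}"
    unfolding linear_extensions_def by (auto simp: list_order_append)
  also have "\<dots> \<longleftrightarrow> v \<in> V \<and> (\<forall>w\<in>V. (v, w) \<notin> R) \<and> xs \<in> linear_extensions (V - {v}) R"
    unfolding linear_extensions_def using list_order_subset by blast
  finally show ?thesis .
qed

lemma card_linear_extensions_by_last:
  assumes "finite V" "V \<noteq> {}"
  shows "card (linear_extensions V R) =
    (\<Sum>v \<in> {v \<in> V. \<forall>w\<in>V. (v, w) \<notin> R}. card (linear_extensions (V - {v}) R))"
proof -
  let ?M = "{v \<in> V. \<forall>w\<in>V. (v, w) \<notin> R}"
  have split: "linear_extensions V R = (\<Union>v\<in>?M. (\<lambda>xs. xs @ [v]) ` linear_extensions (V - {v}) R)"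
  proof (intro subset_antisym subsetI)
    fix xs assume xs: "xs \<in> linear_extensions V R"
    then have "xs \<noteq> []" using assms(2) unfolding linear_extensions_def by auto
    then obtain ys v where xs_eq: "xs = ys @ [v]" by (metis rev_exhaust)
    with xs have "v \<in> ?M" "ys \<in> linear_extensions (V - {v}) R"
      by (simp_all add: snoc_in_linear_extensions_iff)
    with xs_eq show "xs \<in> (\<Union>v\<in>?M. (\<lambda>xs. xs @ [v]) ` linear_extensions (V - {v}) R)"
      by blast
  next
    fix xs assume "xs \<in> (\<Union>v\<in>?M. (\<lambda>xs. xs @ [v]) ` linear_extensions (V - {v}) R)"
    then show "xs \<in> linear_extensions V R"
      by (auto simp: snoc_in_linear_extensions_iff)
  qed
  have "card (linear_extensions V R) = (\<Sum>v\<in>?M. card ((\<lambda>xs. xs @ [v]) ` linear_extensions (V - {v}) R))"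
    unfolding split using assms(1) by (intro card_UN_disjoint) (auto simp: finite_linear_extensions)
  also have "\<dots> = (\<Sum>v\<in>?M. card (linear_extensions (V - {v}) R))"
    by (intro sum.cong refl card_image) (simp add: inj_on_def)
  finally show ?thesis .
qed

lemma card_linear_extensions_remove_greatest:
  assumes "finite V" "t \<in> V" "\<forall>w\<in>V. (t, w) \<notin> R" "\<forall>v\<in>V - {t}. (v, t) \<in> R"
  shows "card (linear_extensions V R) = card (linear_extensions (V - {t}) R)"
proof -
  have "{v \<in> V. \<forall>w\<in>V. (v, w) \<notin> R} = {t}" using assms(2-4) by blast
  then show ?thesis using card_linear_extensions_by_last[of V R] assms(1,2) by auto
qed

text \<open>Remove the sink, then the source as the sink of the converse relation; what remains is
  unconstrained.\<close>

lemma card_linear_extensions_source_sink: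
  assumes "finite V" "s \<in> V" "t \<in> V" "s \<noteq> t"
    and R: "Restr R V = {s} \<times> (V - {s}) \<union> (V - {t}) \<times> {t}"
  shows "card (linear_extensions V R) = fact (card V - 2)"
proof -
  have edge: "(p, q) \<in> R \<longleftrightarrow> p = s \<and> q \<noteq> s \<or> q = t \<and> p \<noteq> t" if "p \<in> V" "q \<in> V" for p q
    using that R by blast
  have "card (linear_extensions V R) = card (linear_extensions (V - {t}) R)"
    using assms(1-4) by (intro card_linear_extensions_remove_greatest) (auto simp: edge)
  also have "\<dots> = card (linear_extensions (V - {t}) (R\<inverse>))"
    by (rule card_linear_extensions_converse[symmetric])
  also have "\<dots> = card (linear_extensions (V - {t} - {s}) (R\<inverse>))"
    using assms(1-4) by (intro card_linear_extensions_remove_greatest) (auto simp: edge)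
  also have "linear_extensions (V - {t} - {s}) (R\<inverse>) = permutations_of_set (V - {t} - {s})"
    by (intro linear_extensions_unconstrained) (auto simp: edge)
  finally show ?thesis using assms(1-4) by (simp add: numeral_2_eq_2)
qed

section \<open>Forests and the hook length formula\<close>

lemma acyclic_if_ranked:
  fixes f :: "'a \<Rightarrow> nat"
  assumes "\<forall>(u, v) \<in> R. f u < f v" shows "acyclic R"
  using assms by (intro acyclic_subset[OF wf_acyclic[OF wf_measure[of f]]]) auto

lemma reaches_maximal:
  assumes "finite R" "acyclic R"
  shows "\<exists>r. (u, r) \<in> R\<^sup>* \<and> (\<forall>w. (r, w) \<notin> R)"
  using finite_acyclic_wf_converse[OF assms]
proof (induction u rule: wf_induct_rule)
  case (less u)
  show ?case
  proof (cases "\<forall>w. (u, w) \<notin> R")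
    case False
    then obtain w where "(u, w) \<in> R" by blast
    with less obtain r where "(w, r) \<in> R\<^sup>*" "\<forall>w. (r, w) \<notin> R" by blast
    with \<open>(u, w) \<in> R\<close> show ?thesis by (blast intro: converse_rtrancl_into_rtrancl)
  qed blast
qed

lemma reached_from_minimal:
  assumes "finite R" "acyclic R"
  shows "\<exists>s. (s, u) \<in> R\<^sup>* \<and> (\<forall>w. (w, s) \<notin> R)"
  using reaches_maximal[of "R\<inverse>" u] assms by (simp add: rtrancl_converse)

lemma acyclic_no_2cycle: "acyclic R \<Longrightarrow> (u, v) \<in> R \<Longrightarrow> (v, u) \<notin> R"
  unfolding acyclic_def by (meson r_into_trancl trancl_into_trancl)

text \<open>Edges point from a vertex to its parent: the forests are the acyclic single-valued
  relations, their roots are the maximal elements, and \<^term>\<open>card (subtree R v)\<close> is the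
  hook length of \<open>v\<close>.\<close>

definition subtree :: "('a \<times> 'a) set \<Rightarrow> 'a \<Rightarrow> 'a set" where
  "subtree R v = {u. (u, v) \<in> R\<^sup>*}"

lemma subtree_unfold: "subtree R v = insert v (\<Union>w \<in> {w. (w, v) \<in> R}. subtree R w)"
  unfolding subtree_def by (auto elim: rtranclE intro: rtrancl_into_rtrancl)

lemma subtree_leaf: "v \<notin> Range R \<Longrightarrow> subtree R v = {v}"
  by (subst subtree_unfold) auto

lemma subtree_subset: "R \<subseteq> V \<times> V \<Longrightarrow> v \<in> V \<Longrightarrow> subtree R v \<subseteq> V"
  unfolding subtree_def by (auto elim: converse_rtranclE)

lemma subtree_remove_root:
  assumes root: "\<forall>w. (r, w) \<notin> R" and "v \<noteq> r"
  shows "subtree (R - UNIV \<times> {r}) v = subtree R v"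
proof
  show "subtree (R - UNIV \<times> {r}) v \<subseteq> subtree R v"
    unfolding subtree_def by (auto intro: rtrancl_mono[THEN subsetD, of "R - UNIV \<times> {r}" R])
  have "(u, v) \<in> (R - UNIV \<times> {r})\<^sup>*" if "(u, v) \<in> R\<^sup>*" for u
    using that
  proof (induction rule: converse_rtrancl_induct)
    case (step u w)
    have "w \<noteq> r"
    proof
      assume "w = r"
      with step.hyps(2) root have "v = r" by (auto elim: converse_rtranclE)
      with \<open>v \<noteq> r\<close> show False ..
    qed
    with step show ?case by (blast intro: converse_rtrancl_into_rtrancl)
  qed simp
  then show "subtree R v \<subseteq> subtree (R - UNIV \<times> {r}) v"
    unfolding subtree_def by blast
qed

lemma sum_card_subtree_roots:
  assumes "finite V" "R \<subseteq> V \<times> V" "acyclic R" "single_valued R"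
  shows "(\<Sum>r \<in> {r \<in> V. \<forall>w\<in>V. (r, w) \<notin> R}. card (subtree R r)) = card V"
proof -
  let ?M = "{r \<in> V. \<forall>w\<in>V. (r, w) \<notin> R}"
  have root_iff: "r \<in> ?M \<longleftrightarrow> r \<in> V \<and> (\<forall>w. (r, w) \<notin> R)" for r
    using assms(2) by blast
  have "finite R" using assms(1,2) finite_subset by blast
  have "V \<subseteq> (\<Union>r\<in>?M. subtree R r)"
  proof
    fix u assume "u \<in> V"
    obtain r where r: "(u, r) \<in> R\<^sup>*" "\<forall>w. (r, w) \<notin> R"
      using reaches_maximal[OF \<open>finite R\<close> assms(3)] by blast
    then have "r \<in> V" using \<open>u \<in> V\<close> assms(2) by (auto elim: rtranclE)
    with r show "u \<in> (\<Union>r\<in>?M. subtree R r)" unfolding root_iff subtree_def by blast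
  qed
  moreover have "(\<Union>r\<in>?M. subtree R r) \<subseteq> V"
    using subtree_subset[OF assms(2)] by blast
  ultimately have cover: "(\<Union>r\<in>?M. subtree R r) = V" by blast
  have root_rtrancl: "w = r" if "r \<in> ?M" "(r, w) \<in> R\<^sup>*" for r w
    using that(2) by (rule converse_rtranclE) (use that(1) root_iff in blast)+
  have disjoint: "subtree R r \<inter> subtree R r' = {}" if "r \<in> ?M" "r' \<in> ?M" "r \<noteq> r'" for r r'
  proof -
    have "(u, r) \<notin> R\<^sup>* \<or> (u, r') \<notin> R\<^sup>*" for u
      using single_valued_confluent[OF assms(4), of u r r'] root_rtrancl that by blast
    then show ?thesis unfolding subtree_def by blast
  qed
  have "card (\<Union>r\<in>?M. subtree R r) = (\<Sum>r\<in>?M. card (subtree R r))"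
  proof (rule card_UN_disjoint)
    show "finite ?M" using assms(1) by simp
    show "\<forall>r\<in>?M. finite (subtree R r)"
      using subtree_subset[OF assms(2)] finite_subset[OF _ assms(1)] by blast
    show "\<forall>r\<in>?M. \<forall>r'\<in>?M. r \<noteq> r' \<longrightarrow> subtree R r \<inter> subtree R r' = {}"
      using disjoint by blast
  qed
  then show ?thesis by (simp add: cover)
qed

text \<open>Every linear extension ends in a root \<open>r\<close>; removing \<open>r\<close> leaves the other hook
  lengths unchanged, and the subtrees of the roots partition the vertex set.\<close>

theorem card_linear_extensions_forest:
  assumes "finite V" "R \<subseteq> V \<times> V" "acyclic R" "single_valued R"
  shows "card (linear_extensions V R) * (\<Prod>v\<in>V. card (subtree R v)) = fact (card V)"
  using assms
proof (induction "card V" arbitrary: V R)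
  case 0
  then show ?case by (simp add: linear_extensions_empty)
next
  case (Suc n)
  let ?M = "{r \<in> V. \<forall>w\<in>V. (r, w) \<notin> R}"
  let ?P = "\<lambda>V R. \<Prod>v\<in>V. card (subtree R v)"
  have remove_root: "card (linear_extensions (V - {r}) R) * ?P V R = fact n * card (subtree R r)"
    if "r \<in> ?M" for r
  proof -
    let ?R = "Restr R (V - {r})"
    have R_eq: "?R = R - UNIV \<times> {r}" using that Suc.prems(2) by blast
    have "acyclic ?R" "single_valued ?R"
      using acyclic_subset[OF Suc.prems(3)] single_valued_subset[OF _ Suc.prems(4)] by blast+
    moreover have "n = card (V - {r})" using Suc.hyps(2) Suc.prems(1) that by simp
    ultimately have "card (linear_extensions (V - {r}) ?R) * ?P (V - {r}) ?R = fact n"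
      using Suc.hyps(1)[of "V - {r}" ?R] Suc.prems(1) by auto
    moreover have "linear_extensions (V - {r}) ?R = linear_extensions (V - {r}) R"
      by (rule linear_extensions_cong) auto
    moreover have "?P (V - {r}) ?R = ?P (V - {r}) R"
      unfolding R_eq using that Suc.prems(2) by (intro prod.cong refl, subst subtree_remove_root) auto
    moreover have "?P V R = card (subtree R r) * ?P (V - {r}) R"
      using that Suc.prems(1) by (auto intro: prod.remove)
    ultimately show ?thesis by (simp add: ac_simps)
  qed
  have "V \<noteq> {}" using Suc.hyps(2) by auto
  then have "card (linear_extensions V R) * ?P V R
      = (\<Sum>r\<in>?M. card (linear_extensions (V - {r}) R) * ?P V R)"
    by (simp add: card_linear_extensions_by_last[OF Suc.prems(1)] sum_distrib_right)
  also have "\<dots> = fact n * (\<Sum>r\<in>?M. card (subtree R r))"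
    by (simp add: remove_root sum_distrib_left)
  also have "\<dots> = fact (card V)"
    using sum_card_subtree_roots[OF Suc.prems] Suc.hyps(2)[symmetric] by simp
  finally show ?case .
qed

lemma prod_card_subtree_eq:
  assumes "finite V" "N \<subseteq> V" "V \<inter> Range R \<subseteq> N"
  shows "(\<Prod>v\<in>V. card (subtree R v)) = (\<Prod>v\<in>N. card (subtree R v))"
proof (rule prod.mono_neutral_right)
  show "\<forall>v\<in>V - N. card (subtree R v) = 1"
  proof
    fix v assume "v \<in> V - N"
    with assms(3) have "v \<notin> Range R" by blast
    then show "card (subtree R v) = 1" by (simp add: subtree_leaf)
  qed
qed (use assms in auto)

corollary card_linear_extensions_star:
  assumes "finite V" "S \<subseteq> V" "w \<in> V" "w \<notin> S"
  shows "card (linear_extensions V (S \<times> {w})) * (card S + 1) = fact (card V)"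
proof -
  let ?R = "S \<times> {w}"
  have "acyclic ?R"
    by (rule acyclic_if_ranked[of _ "\<lambda>v. if v = w then 1 else 0"]) (use assms in auto)
  moreover have "single_valued ?R" by (auto simp: single_valued_def)
  moreover have "(\<Prod>v\<in>V. card (subtree ?R v)) = card S + 1"
  proof -
    have leaf: "subtree ?R v = {v}" if "v \<in> S" for v
      using that assms(4) by (intro subtree_leaf) auto
    have "subtree ?R w = insert w S"
      by (subst subtree_unfold) (auto simp: leaf)
    moreover have "finite S" using assms(1,2) finite_subset by blast
    ultimately show ?thesis
      using assms by (subst prod_card_subtree_eq[of V "{w}"]) auto
  qed
  ultimately show ?thesis using card_linear_extensions_forest[of V ?R] assms by auto
qed

corollary card_linear_extensions_two_stars:
  assumes "finite V" "A \<subseteq> V" "B \<subseteq> V" "a \<in> V" "b \<in> V" "a \<noteq> b" "A \<inter> B = {}"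
    "a \<notin> A \<union> B" "b \<notin> A \<union> B"
  shows "card (linear_extensions V (A \<times> {a} \<union> B \<times> {b})) * ((card A + 1) * (card B + 1))
    = fact (card V)"
proof -
  let ?R = "A \<times> {a} \<union> B \<times> {b}"
  have "acyclic ?R"
    by (rule acyclic_if_ranked[of _ "\<lambda>v. if v \<in> {a, b} then 1 else 0"]) (use assms in auto)
  moreover have "single_valued ?R" using assms(7) by (auto simp: single_valued_def)
  moreover have "(\<Prod>v\<in>V. card (subtree ?R v)) = (card A + 1) * (card B + 1)"
  proof -
    have leaf: "subtree ?R v = {v}" if "v \<in> A \<union> B" for v
      using that assms(8,9) by (intro subtree_leaf) auto
    have "subtree ?R a = insert a A"
      by (subst subtree_unfold) (use assms in \<open>auto simp: leaf\<close>)
    moreover have "subtree ?R b = insert b B"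
      by (subst subtree_unfold) (use assms in \<open>auto simp: leaf\<close>)
    moreover have "finite A" "finite B" using assms(1-3) finite_subset by blast+
    ultimately show ?thesis
      using assms by (subst prod_card_subtree_eq[of V "{a, b}"]) auto
  qed
  ultimately show ?thesis using card_linear_extensions_forest[of V ?R] assms by auto
qed

corollary card_linear_extensions_path_star:
  assumes "finite V" "Q \<subseteq> V" "u \<in> V" "a \<in> V" "b \<in> V" "distinct [u, a, b]" "u \<notin> Q" "a \<notin> Q" "b \<notin> Q"
  shows "card (linear_extensions V ({(u, a), (a, b)} \<union> Q \<times> {b})) * (2 * (card Q + 3))
    = fact (card V)"
proof -
  let ?R = "{(u, a), (a, b)} \<union> Q \<times> {b}"
  have "acyclic ?R"
    by (rule acyclic_if_ranked[of _ "\<lambda>v. if v = b then 2 else if v = a then 1 else 0"])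
      (use assms in auto)
  moreover have "single_valued ?R" using assms by (auto simp: single_valued_def)
  moreover have "(\<Prod>v\<in>V. card (subtree ?R v)) = 2 * (card Q + 3)"
  proof -
    have leaf: "subtree ?R v = {v}" if "v \<in> insert u Q" for v
      using that assms(6,8,9) by (intro subtree_leaf) auto
    have a: "subtree ?R a = {a, u}"
      by (subst subtree_unfold) (use assms in \<open>auto simp: leaf[simplified]\<close>)
    have "subtree ?R b = insert b (insert a (insert u Q))"
      by (subst subtree_unfold) (use assms a in \<open>auto simp: leaf[simplified]\<close>)
    moreover have "finite Q" using assms(1,2) finite_subset by blast
    ultimately show ?thesis
      using assms a by (subst prod_card_subtree_eq[of V "{a, b}"]) auto
  qed
  ultimately show ?thesis using card_linear_extensions_forest[of V ?R] assms by auto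
qed

section \<open>Task-dependency graphs\<close>

lemma Range_singleton_eq: "Range R = {w} \<Longrightarrow> R = Domain R \<times> {w}"
proof (intro subset_antisym subsetI)
  assume range: "Range R = {w}"
  fix p assume "p \<in> R"
  with range show "p \<in> Domain R \<times> {w}" by (cases p) blast
next
  assume range: "Range R = {w}"
  fix p assume "p \<in> Domain R \<times> {w}"
  then obtain u v where "p = (u, w)" "(u, v) \<in> R" by blast
  moreover from this have "v = w" using range by blast
  ultimately show "p \<in> R" by simp
qed

lemma double_sum_le_mult_succ:
  fixes s t :: nat
  assumes "1 \<le> s" "1 \<le> t"
  shows "2 * (s + t) \<le> (s + 1) * (t + 1)"
proof -
  obtain i j where "s = i + 1" "t = j + 1" using assms by (metis le_add_diff_inverse2)
  then show ?thesis by (simp add: algebra_simps)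
qed

lemma split_union_nonempty:
  assumes "A \<noteq> {}" "B \<noteq> {}" "2 \<le> card (A \<union> B)"
  obtains A' B' where "A' \<subseteq> A" "B' \<subseteq> B" "A' \<inter> B' = {}" "A' \<noteq> {}" "B' \<noteq> {}" "A' \<union> B' = A \<union> B"
proof (cases "B \<subseteq> A")
  case True
  obtain c where "c \<in> B" using assms(2) by blast
  have "A - {c} \<noteq> {}"
  proof
    assume "A - {c} = {}"
    then have "A \<union> B \<subseteq> {c}" using True by blast
    then have "card (A \<union> B) \<le> 1" using card_mono[of "{c}"] by fastforce
    with assms(3) show False by simp
  qed
  then show ?thesis using that[of "A - {c}" "{c}"] True \<open>c \<in> B\<close> by blast
next
  case False
  then show ?thesis using that[of A "B - A"] assms(1) by blast
qed

lemma orderings_eq_linear_extensions: "orderings n E = linear_extensions {0..<n} E"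
proof -
  have "(\<forall>(u, v) \<in> E. \<forall>i j. i < length xs \<longrightarrow> j < length xs \<longrightarrow> xs ! i = u \<longrightarrow> xs ! j = v \<longrightarrow> i < j)
    \<longleftrightarrow> E \<inter> set xs \<times> set xs \<subseteq> list_order xs" if "distinct xs" for xs :: "nat list"
  proof
    assume before: "\<forall>(u, v) \<in> E. \<forall>i j. i < length xs \<longrightarrow> j < length xs \<longrightarrow> xs ! i = u \<longrightarrow> xs ! j = v \<longrightarrow> i < j"
    show "E \<inter> set xs \<times> set xs \<subseteq> list_order xs"
    proof clarify
      fix u v assume "(u, v) \<in> E" "u \<in> set xs" "v \<in> set xs"
      then obtain i j where "i < length xs" "j < length xs" "xs ! i = u" "xs ! j = v"
        by (auto simp: in_set_conv_nth)
      with before \<open>(u, v) \<in> E\<close> show "(u, v) \<in> list_order xs"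
        unfolding list_order_iff_nth by blast
    qed
  next
    assume sub: "E \<inter> set xs \<times> set xs \<subseteq> list_order xs"
    have "i < j" if "(xs ! i, xs ! j) \<in> E" "i < length xs" "j < length xs" for i j
    proof -
      have "(xs ! i, xs ! j) \<in> list_order xs" using sub that by auto
      then obtain i' j' where "i' < j'" "j' < length xs" "xs ! i' = xs ! i" "xs ! j' = xs ! j"
        unfolding list_order_iff_nth by blast
      with \<open>distinct xs\<close> that(2,3) show "i < j"
        by (simp add: nth_eq_iff_index_eq)
    qed
    then show "\<forall>(u, v) \<in> E. \<forall>i j. i < length xs \<longrightarrow> j < length xs \<longrightarrow> xs ! i = u \<longrightarrow> xs ! j = v \<longrightarrow> i < j"
      by blast
  qed
  then show ?thesis
    unfolding orderings_def linear_extensions_def by blast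
qed

lemma num_orderings_eq: "num_orderings n E = card (linear_extensions {0..<n} E)"
  by (simp add: num_orderings_def orderings_eq_linear_extensions)

lemma num_orderings_le_if_subset_trancl:
  "tdg n E \<Longrightarrow> R \<subseteq> E\<^sup>+ \<Longrightarrow> num_orderings n E \<le> card (linear_extensions {0..<n} R)"
  unfolding num_orderings_eq tdg_def by (intro card_linear_extensions_le_if_subset_trancl) auto

lemma initial_vertices_eq: "initial_vertices n E = {0..<n} - Range E"
  unfolding initial_vertices_def by blast

lemma terminal_vertices_eq: "terminal_vertices n E = {0..<n} - Domain E"
  unfolding terminal_vertices_def by blast

lemma card_initial_vertices: "tdg n E \<Longrightarrow> card (initial_vertices n E) = n - card (Range E)"
  unfolding initial_vertices_eq tdg_def by (subst card_Diff_subset) (auto intro: finite_subset)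

lemma card_terminal_vertices: "tdg n E \<Longrightarrow> card (terminal_vertices n E) = n - card (Domain E)"
  unfolding terminal_vertices_eq tdg_def by (subst card_Diff_subset) (auto intro: finite_subset)

lemma card_Range_le: "tdg n E \<Longrightarrow> card (Range E) \<le> n"
  unfolding tdg_def using card_mono[of "{0..<n}" "Range E"] by fastforce

lemma card_Domain_le: "tdg n E \<Longrightarrow> card (Domain E) \<le> n"
  unfolding tdg_def using card_mono[of "{0..<n}" "Domain E"] by fastforce

lemma tdg_no_2cycle: "tdg n E \<Longrightarrow> (u, v) \<in> E \<Longrightarrow> (v, u) \<notin> E"
  unfolding tdg_def using acyclic_no_2cycle[of E u v] by simp

lemma tdg_if_increasing: "E \<subseteq> {0..<n} \<times> {0..<n} \<Longrightarrow> \<forall>(u, v) \<in> E. u < v \<Longrightarrow> tdg n E"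
  unfolding tdg_def using acyclic_if_ranked[of E id] by simp

lemma reached_from_initial_vertex:
  assumes "tdg n E" "v \<in> {0..<n}"
  shows "\<exists>s \<in> initial_vertices n E. (s, v) \<in> E\<^sup>*"
proof -
  have sub: "E \<subseteq> {0..<n} \<times> {0..<n}" and "acyclic E" using assms(1) unfolding tdg_def by auto
  then have "finite E" using finite_subset by blast
  obtain s where path: "(s, v) \<in> E\<^sup>*" and "\<forall>w. (w, s) \<notin> E"
    using reached_from_minimal[OF \<open>finite E\<close> \<open>acyclic E\<close>] by blast
  moreover have "s \<in> {0..<n}"
    using path assms(2) trancl_subset_Sigma[OF sub] by (auto simp: rtrancl_eq_or_trancl)
  ultimately show ?thesis unfolding initial_vertices_def by blast
qed

lemma reaches_terminal_vertex:
  assumes "tdg n E" "v \<in> {0..<n}"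
  shows "\<exists>t \<in> terminal_vertices n E. (v, t) \<in> E\<^sup>*"
proof -
  have sub: "E \<subseteq> {0..<n} \<times> {0..<n}" and "acyclic E" using assms(1) unfolding tdg_def by auto
  then have "finite E" using finite_subset by blast
  obtain t where path: "(v, t) \<in> E\<^sup>*" and "\<forall>w. (t, w) \<notin> E"
    using reaches_maximal[OF \<open>finite E\<close> \<open>acyclic E\<close>] by blast
  moreover have "t \<in> {0..<n}"
    using path assms(2) trancl_subset_Sigma[OF sub] by (auto simp: rtrancl_eq_or_trancl)
  ultimately show ?thesis unfolding terminal_vertices_def by blast
qed

lemma max_orderings_isI:
  assumes "xy_tdg x y n E\<^sub>0" "num_orderings n E\<^sub>0 * d = N"
    and "\<And>E. xy_tdg x y n E \<Longrightarrow> num_orderings n E * d \<le> N" and "0 < d"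
  shows "max_orderings_is x y n (real N / real d)"
  unfolding max_orderings_is_def
proof (intro conjI exI allI impI)
  show "real (num_orderings n E\<^sub>0) = real N / real d"
    using assms(2,4) by (simp add: field_simps flip: of_nat_mult)
  show "real (num_orderings n E) \<le> real N / real d" if "xy_tdg x y n E" for E
    using assms(3)[OF that] assms(4) by (simp add: field_simps flip: of_nat_mult)
qed (rule assms(1))

lemma xy_tdg_all_initial: "xy_tdg x y x E \<Longrightarrow> x = y"
proof -
  assume xy: "xy_tdg x y x E"
  then have "card ({0..<x} - Range E) = card {0..<x}"
    unfolding xy_tdg_def initial_vertices_eq by simp
  then have "{0..<x} - Range E = {0..<x}" by (intro card_subset_eq) auto
  moreover have "Range E \<subseteq> {0..<x}" using xy unfolding xy_tdg_def tdg_def by blast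
  ultimately have "Range E = {}" by blast
  then have "E = {}" by (simp add: Range_empty_iff)
  then show "x = y" using xy unfolding xy_tdg_def terminal_vertices_eq by simp
qed

lemma max_orderings_all_initial: "max_orderings_is x x x (real (fact x))"
  unfolding max_orderings_is_def
proof (intro conjI exI allI impI)
  show "xy_tdg x x x {}"
    unfolding xy_tdg_def tdg_def initial_vertices_eq terminal_vertices_eq by (simp add: acyclic_def)
  show "real (num_orderings x {}) = real (fact x)"
    by (simp add: num_orderings_eq linear_extensions_unconstrained)
  show "real (num_orderings x E) \<le> real (fact x)" for E
    unfolding num_orderings_eq of_nat_le_iff
    using card_linear_extensions_le_fact[of "{0..<x}" E] by simp
qed

lemma num_orderings_one_noninitial:
  assumes xy: "xy_tdg x y (x + 1) E" and "y \<le> x"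
  shows "num_orderings (x + 1) E * (x - y + 2) = fact (x + 1)"
proof -
  have tdg: "tdg (x + 1) E" and sub: "E \<subseteq> {0..<x + 1} \<times> {0..<x + 1}"
    using xy unfolding xy_tdg_def tdg_def by auto
  have "card (Range E) = 1"
    using xy card_initial_vertices[OF tdg] card_Range_le[OF tdg] unfolding xy_tdg_def by simp
  then obtain w where w: "Range E = {w}" using card_1_singletonE by blast
  define S where "S = Domain E"
  have E_eq: "E = S \<times> {w}" unfolding S_def using w by (rule Range_singleton_eq)
  have "w \<notin> S" using tdg_no_2cycle[OF tdg, of w w] unfolding E_eq by blast
  moreover have "S \<subseteq> {0..<x + 1}" "w \<in> {0..<x + 1}" using sub w unfolding S_def by blast+
  ultimately have "card (linear_extensions {0..<x + 1} (S \<times> {w})) * (card S + 1) = fact (x + 1)"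
    using card_linear_extensions_star[of "{0..<x + 1}" S w] by simp
  moreover have "card S + 1 = x - y + 2"
    using xy card_terminal_vertices[OF tdg] card_Domain_le[OF tdg] \<open>y \<le> x\<close>
    unfolding xy_tdg_def S_def by simp
  ultimately show ?thesis unfolding num_orderings_eq E_eq by simp
qed

lemma max_orderings_one_noninitial:
  assumes "1 \<le> y" "y \<le> x"
  shows "max_orderings_is x y (x + 1) (real (fact (x + 1)) / real (x - y + 2))"
proof (rule max_orderings_isI)
  let ?E = "{0..<x + 1 - y} \<times> {x}"
  have "Range ?E = {x}" "Domain ?E = {0..<x + 1 - y}" using assms by (auto intro: RangeI[of 0])
  moreover have "tdg (x + 1) ?E" using assms by (intro tdg_if_increasing) auto
  ultimately show "xy_tdg x y (x + 1) ?E"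
    using assms card_initial_vertices card_terminal_vertices unfolding xy_tdg_def by simp
  then show "num_orderings (x + 1) ?E * (x - y + 2) = fact (x + 1)"
    using assms(2) by (rule num_orderings_one_noninitial)
qed (use assms num_orderings_one_noninitial in auto)

lemma num_orderings_bound_linked_targets:
  assumes tdg: "tdg n E" and range: "Range E = {a, b}" and ab: "(a, b) \<in> E"
  shows "num_orderings n E * (2 * (card (Domain E) + 1)) \<le> fact n"
proof -
  have sub: "E \<subseteq> {0..<n} \<times> {0..<n}" using tdg unfolding tdg_def by simp
  have target: "v = a \<or> v = b" if "(u, v) \<in> E" for u v using that range by blast
  obtain u where u: "(u, a) \<in> E" using range by blast
  let ?Q = "Domain E - {u, a}"
  let ?F = "{(u, a), (a, b)} \<union> ?Q \<times> {b}"
  have "b \<notin> Domain E" using target tdg_no_2cycle[OF tdg] ab by blast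
  moreover have "distinct [u, a, b]" using tdg_no_2cycle[OF tdg] u ab by auto
  moreover have ua: "{u, a} \<subseteq> Domain E" using u ab by blast
  moreover have fin: "finite (Domain E)" using finite_subset[OF sub] by (simp add: finite_Domain)
  moreover have "card {u, a} \<le> card (Domain E)" using card_mono[OF fin ua] .
  ultimately have card_Q: "card ?Q + 3 = card (Domain E) + 1" by (simp add: card_Diff_subset)
  have "(q, b) \<in> E\<^sup>+" if "q \<in> ?Q" for q
  proof -
    obtain v where "(q, v) \<in> E" using \<open>q \<in> ?Q\<close> by blast
    with target ab show ?thesis by (metis r_into_trancl trancl_into_trancl)
  qed
  with u ab have "?F \<subseteq> E\<^sup>+" by auto
  then have "num_orderings n E \<le> card (linear_extensions {0..<n} ?F)"
    by (rule num_orderings_le_if_subset_trancl[OF tdg])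
  moreover have "card (linear_extensions {0..<n} ?F) * (2 * (card ?Q + 3)) = fact n"
    using card_linear_extensions_path_star[of "{0..<n}" ?Q u a b] sub u ab \<open>b \<notin> Domain E\<close>
      \<open>distinct [u, a, b]\<close> by fastforce
  ultimately show ?thesis using card_Q by (metis mult_le_mono1)
qed

lemma num_orderings_bound_unlinked_targets:
  assumes tdg: "tdg n E" and range: "Range E = {a, b}" and "a \<noteq> b" "(a, b) \<notin> E" "(b, a) \<notin> E"
    and "2 \<le> card (Domain E)"
  shows "num_orderings n E * (2 * card (Domain E)) \<le> fact n"
proof -
  have sub: "E \<subseteq> {0..<n} \<times> {0..<n}" using tdg unfolding tdg_def by simp
  let ?A = "{u. (u, a) \<in> E}" and ?B = "{u. (u, b) \<in> E}"
  have "(a, a) \<notin> E" "(b, b) \<notin> E" using tdg_no_2cycle[OF tdg] by blast+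
  then have ab: "a \<notin> ?A \<union> ?B" "b \<notin> ?A \<union> ?B" using assms(4,5) by auto
  have "v = a \<or> v = b" if "(u, v) \<in> E" for u v using that range by blast
  then have "Domain E = ?A \<union> ?B" by blast
  moreover have "?A \<noteq> {}" "?B \<noteq> {}" using range by blast+
  ultimately obtain A B where AB: "A \<subseteq> ?A" "B \<subseteq> ?B" "A \<inter> B = {}" "A \<noteq> {}" "B \<noteq> {}"
    "A \<union> B = Domain E"
    using split_union_nonempty assms(6) by metis
  have "finite (Domain E)" using finite_subset[OF sub] by (simp add: finite_Domain)
  then have fin: "finite A" "finite B" using AB(6) by (metis finite_Un)+
  let ?F = "A \<times> {a} \<union> B \<times> {b}"
  have "?F \<subseteq> E\<^sup>+" using AB(1,2) by blast
  then have "num_orderings n E \<le> card (linear_extensions {0..<n} ?F)"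
    by (rule num_orderings_le_if_subset_trancl[OF tdg])
  moreover have "2 * card (Domain E) \<le> (card A + 1) * (card B + 1)"
    using double_sum_le_mult_succ[of "card A" "card B"] AB fin card_Un_disjoint[of A B]
    by (simp add: Suc_le_eq card_gt_0_iff)
  ultimately have "num_orderings n E * (2 * card (Domain E))
      \<le> card (linear_extensions {0..<n} ?F) * ((card A + 1) * (card B + 1))"
    by (rule mult_le_mono)
  also have "\<dots> = fact n"
  proof -
    have "A \<union> B \<subseteq> {0..<n}" "{a, b} \<subseteq> {0..<n}" using AB(6) range sub by blast+
    then show ?thesis
      using card_linear_extensions_two_stars[of "{0..<n}" A B a b] AB(1-3) ab \<open>a \<noteq> b\<close> by auto
  qed
  finally show ?thesis .
qed

lemma num_orderings_bound_two_noninitial: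
  assumes xy: "xy_tdg x y (x + 2) E" and "y \<le> x"
  shows "num_orderings (x + 2) E * (2 * (x - y + 2)) \<le> fact (x + 2)"
    and "y = 1 \<Longrightarrow> num_orderings (x + 2) E * (2 * (x - y + 3)) \<le> fact (x + 2)"
proof -
  have tdg: "tdg (x + 2) E" using xy unfolding xy_tdg_def by simp
  have "card (Range E) = 2"
    using xy card_initial_vertices[OF tdg] card_Range_le[OF tdg] unfolding xy_tdg_def by simp
  then obtain a b where range: "Range E = {a, b}" and "a \<noteq> b" by (meson card_2_iff)
  have card_Domain: "card (Domain E) = x + 2 - y"
    using xy card_terminal_vertices[OF tdg] card_Domain_le[OF tdg] unfolding xy_tdg_def by simp
  have linked: "num_orderings (x + 2) E * (2 * (x - y + 3)) \<le> fact (x + 2)"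
    if "(a, b) \<in> E \<or> (b, a) \<in> E"
  proof -
    have "num_orderings (x + 2) E * (2 * (card (Domain E) + 1)) \<le> fact (x + 2)"
      using num_orderings_bound_linked_targets[OF tdg] range that by (metis insert_commute)
    moreover have "card (Domain E) + 1 = x - y + 3" using card_Domain \<open>y \<le> x\<close> by simp
    ultimately show ?thesis by metis
  qed
  have unlinked: "2 \<le> y \<and> num_orderings (x + 2) E * (2 * (x - y + 2)) \<le> fact (x + 2)"
    if "(a, b) \<notin> E" "(b, a) \<notin> E"
  proof -
    have "v = a \<or> v = b" if "(u, v) \<in> E" for u v using that range by blast
    with that tdg_no_2cycle[OF tdg] have "Domain E \<inter> Range E = {}" unfolding range by blast
    then have "Domain E \<subseteq> initial_vertices (x + 2) E"
      using tdg unfolding initial_vertices_eq tdg_def by blast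
    then have "card (Domain E) \<le> x"
      using xy card_mono[of "initial_vertices (x + 2) E"] unfolding xy_tdg_def initial_vertices_def
      by fastforce
    then have "2 \<le> y" "2 \<le> card (Domain E)" "card (Domain E) = x - y + 2"
      using card_Domain \<open>y \<le> x\<close> by simp_all
    then show ?thesis
      using num_orderings_bound_unlinked_targets[OF tdg range \<open>a \<noteq> b\<close>] that by simp
  qed
  show "num_orderings (x + 2) E * (2 * (x - y + 2)) \<le> fact (x + 2)"
  proof (cases "(a, b) \<in> E \<or> (b, a) \<in> E")
    case True
    have "num_orderings (x + 2) E * (2 * (x - y + 2)) \<le> num_orderings (x + 2) E * (2 * (x - y + 3))"
      by (intro mult_le_mono2) simp
    with linked[OF True] show ?thesis by linarith
  qed (use unlinked in blast)
  show "num_orderings (x + 2) E * (2 * (x - y + 3)) \<le> fact (x + 2)" if "y = 1"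
    using linked unlinked that by linarith
qed

lemma max_orderings_two_noninitial:
  assumes "1 < y" "y \<le> x"
  shows "max_orderings_is x y (x + 2) (real (fact (x + 2)) / (2 * real (x - y + 2)))"
proof -
  define p where "p = x - y + 2"
  have p: "2 \<le> p" "p \<le> x" using assms unfolding p_def by auto
  let ?E = "{0} \<times> {x} \<union> {1..<p} \<times> {x + 1}"
  have "Range ?E = {x, x + 1}" "Domain ?E = {0..<p}"
    using p by (auto intro: RangeI[of 0] RangeI[of 1])
  moreover have "tdg (x + 2) ?E" using p by (intro tdg_if_increasing) auto
  ultimately have xy: "xy_tdg x y (x + 2) ?E"
    using p assms card_initial_vertices card_terminal_vertices unfolding xy_tdg_def p_def by simp
  have "card (linear_extensions {0..<x + 2} ?E) * ((card {0::nat} + 1) * (card {1..<p} + 1))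
      = fact (card {0..<x + 2})"
    using p by (intro card_linear_extensions_two_stars) auto
  then have "num_orderings (x + 2) ?E * (2 * p) = fact (x + 2)"
    using p by (simp add: num_orderings_eq mult_2)
  then have "max_orderings_is x y (x + 2) (real (fact (x + 2)) / real (2 * p))"
    using xy num_orderings_bound_two_noninitial(1) assms(2) p
    by (intro max_orderings_isI) (auto simp: p_def)
  then show ?thesis unfolding p_def by simp
qed

lemma max_orderings_two_noninitial_one_terminal:
  assumes "1 \<le> x"
  shows "max_orderings_is x 1 (x + 2) (real (fact (x + 2)) / (2 * real (x + 2)))"
proof -
  let ?E = "{(0, x), (x, x + 1)} \<union> {1..<x} \<times> {x + 1}"
  have "Range ?E = {x, x + 1}" "Domain ?E = {0..<x + 1}" using assms by auto
  moreover have "tdg (x + 2) ?E" using assms by (intro tdg_if_increasing) auto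
  ultimately have xy: "xy_tdg x 1 (x + 2) ?E"
    using card_initial_vertices card_terminal_vertices unfolding xy_tdg_def by simp
  have "card (linear_extensions {0..<x + 2} ?E) * (2 * (card {1..<x} + 3)) = fact (card {0..<x + 2})"
    using assms by (intro card_linear_extensions_path_star) auto
  then have "num_orderings (x + 2) ?E * (2 * (x + 2)) = fact (x + 2)"
    using assms by (simp add: num_orderings_eq)
  then have "max_orderings_is x 1 (x + 2) (real (fact (x + 2)) / real (2 * (x + 2)))"
    using xy num_orderings_bound_two_noninitial(2) assms by (intro max_orderings_isI) auto
  then show ?thesis by simp
qed

lemma num_orderings_single_initial_terminal_le:
  assumes xy: "xy_tdg 1 1 n E" and "2 \<le> n"
  shows "num_orderings n E \<le> fact (n - 2)"
proof -
  let ?V = "{0..<n}"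
  have tdg: "tdg n E" using xy unfolding xy_tdg_def by simp
  obtain s where s: "initial_vertices n E = {s}"
    using xy unfolding xy_tdg_def by (meson card_1_singletonE)
  obtain t where t: "terminal_vertices n E = {t}"
    using xy unfolding xy_tdg_def by (meson card_1_singletonE)
  have s_t: "s \<in> ?V" "t \<in> ?V" using s t unfolding initial_vertices_def terminal_vertices_def by blast+
  have from_s: "(s, v) \<in> E\<^sup>+" if "v \<in> ?V - {s}" for v
    using reached_from_initial_vertex[OF tdg, of v] that s by (simp add: rtrancl_eq_or_trancl)
  have to_t: "(v, t) \<in> E\<^sup>+" if "v \<in> ?V - {t}" for v
    using reaches_terminal_vertex[OF tdg, of v] that t by (simp add: rtrancl_eq_or_trancl)
  have "s \<noteq> t"
  proof
    assume "s = t"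
    define v where "v = (if s = 0 then 1 else (0::nat))"
    have "v \<in> ?V - {s}" using \<open>2 \<le> n\<close> unfolding v_def by auto
    then obtain w where "(s, w) \<in> E" using from_s by (blast dest: tranclD)
    with t \<open>s = t\<close> show False unfolding terminal_vertices_def by blast
  qed
  let ?R = "{s} \<times> (?V - {s}) \<union> (?V - {t}) \<times> {t}"
  have "?R \<subseteq> E\<^sup>+" using from_s to_t by blast
  then have "num_orderings n E \<le> card (linear_extensions ?V ?R)"
    by (rule num_orderings_le_if_subset_trancl[OF tdg])
  also have "\<dots> = fact (n - 2)"
    using s_t \<open>s \<noteq> t\<close> by (subst card_linear_extensions_source_sink) auto
  finally show ?thesis .
qed

lemma max_orderings_single_initial_terminal:
  assumes "2 \<le> n"
  shows "max_orderings_is 1 1 n (real (fact (n - 2)))"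
  unfolding max_orderings_is_def
proof (intro conjI exI allI impI)
  let ?E = "{0} \<times> {1..<n} \<union> {0..<n - 1} \<times> {n - 1}"
  have "Range ?E = {1..<n}" "Domain ?E = {0..<n - 1}" using assms by auto
  moreover have "tdg n ?E" using assms by (intro tdg_if_increasing) auto
  ultimately show "xy_tdg 1 1 n ?E"
    using assms card_initial_vertices card_terminal_vertices unfolding xy_tdg_def by simp
  have "{0..<n} - {0} = {1..<n}" "{0..<n} - {n - 1} = {0..<n - 1}" using assms by auto
  moreover have "?E \<subseteq> {0..<n} \<times> {0..<n}" using assms by auto
  ultimately have "Restr ?E {0..<n} = {0} \<times> ({0..<n} - {0}) \<union> ({0..<n} - {n - 1}) \<times> {n - 1}"
    by (simp only:) blast
  then have "card (linear_extensions {0..<n} ?E) = fact (card {0..<n} - 2)"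
    by (rule card_linear_extensions_source_sink[rotated 4]) (use assms in auto)
  then show "real (num_orderings n ?E) = real (fact (n - 2))"
    by (simp add: num_orderings_eq)
  show "real (num_orderings n E) \<le> real (fact (n - 2))" if "xy_tdg 1 1 n E" for E
    unfolding of_nat_le_iff by (rule num_orderings_single_initial_terminal_le[OF that assms])
qed

theorem mainTheorem20:
  shows "(\<forall>x y n. 1 \<le> y \<and> y \<le> x \<longrightarrow>
            (n = x \<longrightarrow> (\<forall>E. xy_tdg x y n E \<longrightarrow> x = y) \<and>
                        (x = y \<longrightarrow> max_orderings_is x y n (real (fact n)))) \<and>
            (n = x + 1 \<longrightarrow>
               max_orderings_is x y n (real (fact (x + 1)) / real (x - y + 2))) \<and>
            (n = x + 2 \<and> y > 1 \<longrightarrow>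
               max_orderings_is x y n (real (fact (x + 2)) / (2 * real (x - y + 2)))) \<and>
            (n = x + 2 \<and> y = 1 \<longrightarrow>
               max_orderings_is x y n (real (fact (x + 2)) / (2 * real (x - y + 3))))) \<and>
         (\<forall>n. 2 \<le> n \<longrightarrow> max_orderings_is 1 1 n (real (fact (n - 2))))"
proof (intro conjI allI impI)
  fix x y n :: nat
  assume y: "1 \<le> y \<and> y \<le> x"
  show "x = y" if "n = x" "xy_tdg x y n E" for E
    using that xy_tdg_all_initial by blast
  show "max_orderings_is x y n (real (fact n))" if "n = x" "x = y"
    using that max_orderings_all_initial by blast
  show "max_orderings_is x y n (real (fact (x + 1)) / real (x - y + 2))" if "n = x + 1"
    using that y max_orderings_one_noninitial by blast
  show "max_orderings_is x y n (real (fact (x + 2)) / (2 * real (x - y + 2)))"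
    if "n = x + 2 \<and> y > 1"
    using that y max_orderings_two_noninitial by blast
  show "max_orderings_is x y n (real (fact (x + 2)) / (2 * real (x - y + 3)))"
    if "n = x + 2 \<and> y = 1"
    using that y max_orderings_two_noninitial_one_terminal[of x] by simp
next
  show "max_orderings_is 1 1 n (real (fact (n - 2)))" if "2 \<le> n" for n
    using that by (rule max_orderings_single_initial_terminal)
qed

end
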